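(* Let $H\ge 1$, $S\ge1$, let $D=[d_{\theta s}]\in\mathbb{R}^{H\times S}$, let $x_k=[x_{1k},\ldots,x_{Sk}]^\top\in\mathbb{R}^S$ have strictly positive entries summing to $1$, and let $\theta^\star_k\in\{1,\ldots,H\}$ be the unique minimizer of $\theta\mapsto\sum_{s=1}^S d_{\theta s}x_{sk}$. Define $B_k=(\mathbb{1}_He_{\theta^\star_k}^\top-I_H)D$, $C_k=\begin{bmatrix}B_k\\ \mathbb{1}_S^\top\end{bmatrix}\in\mathbb{R}^{(H+1)\times S}$, $y_k=B_kx_k\in\mathbb{R}^H$ (so $y_k(\theta)=\sum_{s}(d_{\theta^\star_k s}-d_{\theta s})x_{sk}$) and $\tilde y_k=\begin{bmatrix}y_k\\1\end{bmatrix}$. Then the constrained system "find $\tilde x_k\in\mathbb{R}^S$ with $\tilde y_k=C_k\tilde x_k$ and all entries of $\tilde x_k$ strictly positive" admits a unique solution if and only if $\mathrm{rank}(C_k)=S$. Consequently, a necessary condition for this system to have a unique solution is $H\ge S$.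
   Context: Interpretation: in a weakly-connected network with $S$ sending sub-networks that are internally homogeneous (all agents in sending sub-network $s$ have the same true distribution $f^{(s)}$ and the same likelihoods $L^{(s)}(\theta)$, $\theta\in\{1,\ldots,H\}$), $d_{\theta s}=D[f^{(s)}\|L^{(s)}(\theta)]$ is the KL divergence, $x_{sk}$ is the aggregate limiting weight from sending sub-network $s$ to receiving agent $k$, and $y_k$ is the vector of limiting normalized log-beliefs at agent $k$; recovering $x_k$ from $y_k$ (with $D$ known) is the topology learning problem. $e_m$ denotes the $m$-th canonical basis vector of $\mathbb{R}^H$, $\mathbb{1}_L$ the all-ones vector of length $L$. *)

theory Defs
  imports "HOL-Analysis.Analysis"
begin

text \<open>Rows of D are indexed by a finite type 'h (H = CARD('h)), columns by 's (S = CARD('s)).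
  The augmented matrix C_k has H+1 rows, indexed by 'h option: Some i is row i of B_k,
  None is the extra all-ones row.\<close>

definition Bmat :: "real^'s^'h \<Rightarrow> 'h \<Rightarrow> real^'s^'h" where
  "Bmat D th = ((\<chi> i j. if j = th then 1 else 0) - mat 1) ** D"

definition Cmat :: "real^'s^'h \<Rightarrow> 'h \<Rightarrow> real^'s^('h option)" where
  "Cmat D th = (\<chi> r. case r of Some i \<Rightarrow> Bmat D th $ i | None \<Rightarrow> (\<chi> s. 1))"

definition ytilde :: "real^'s^'h \<Rightarrow> 'h \<Rightarrow> real^'s \<Rightarrow> real^('h option)" where
  "ytilde D th x = (\<chi> r. case r of Some i \<Rightarrow> (Bmat D th *v x) $ i | None \<Rightarrow> 1)"

end

theory Submission
  imports Defs
begin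

text \<open>Since \<open>x\<close> sums to one, \<open>ytilde D th x = Cmat D th *v x\<close>, so \<open>x\<close> itself is a positive
  solution. The positive orthant is open, so if some nonzero \<open>v\<close> satisfied \<open>C v = 0\<close> then
  \<open>x + e v\<close> would be a second positive solution for small \<open>e\<close>; hence the positive solution is
  unique iff \<open>C\<close> is injective, i.e.\ has full column rank \<open>S\<close>. Row \<open>th\<close> of \<open>B\<close> vanishes, so
  \<open>C\<close> has at most \<open>H\<close> nonzero rows and full column rank forces \<open>H \<ge> S\<close>.\<close>

lemma linear_inj_iff_unique_preimage_in_open:
  fixes f :: "'a::real_normed_vector \<Rightarrow> 'b::real_vector"
  assumes "linear f" and "open U" and "x \<in> U"
  shows "(\<exists>!y. f x = f y \<and> y \<in> U) \<longleftrightarrow> inj f"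
proof
  assume unique: "\<exists>!y. f x = f y \<and> y \<in> U"
  show "inj f"
    unfolding linear_injective_0[OF \<open>linear f\<close>]
  proof (intro allI impI, rule ccontr)
    fix v assume "f v = 0" and "v \<noteq> 0"
    obtain e where "e > 0" and ball: "ball x e \<subseteq> U"
      using \<open>open U\<close> \<open>x \<in> U\<close> by (auto simp: open_contains_ball)
    define y where "y = x + (e / (2 * norm v)) *\<^sub>R v"
    have "dist x y = e / 2"
      using \<open>v \<noteq> 0\<close> \<open>e > 0\<close> by (simp add: y_def dist_norm)
    with \<open>e > 0\<close> ball have "y \<in> U" by auto
    moreover have "f y = f x"
      using \<open>f v = 0\<close> by (simp add: y_def linear_add[OF \<open>linear f\<close>] linear_scale[OF \<open>linear f\<close>])
    moreover have "y \<noteq> x"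
      using \<open>v \<noteq> 0\<close> \<open>e > 0\<close> by (simp add: y_def)
    ultimately show False
      using unique \<open>x \<in> U\<close> by metis
  qed
next
  assume "inj f"
  then show "\<exists>!y. f x = f y \<and> y \<in> U"
    using \<open>x \<in> U\<close> by (auto dest: injD)
qed

lemma open_positive_orthant_cart: "open {y::real^'n. \<forall>i. 0 < y $ i}"
proof -
  have "{y::real^'n. \<forall>i. 0 < y $ i} = (\<Inter>i. {y. y $ i > 0})" by auto
  then show ?thesis
    by (simp add: open_INT open_halfspace_component_gt_cart)
qed

lemma unique_positive_preimage_iff_full_rank:
  fixes A :: "real^'n^'m"
  assumes "\<forall>i. x $ i > 0"
  shows "(\<exists>!y. A *v x = A *v y \<and> (\<forall>i. y $ i > 0)) \<longleftrightarrow> rank A = CARD('n)"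
  using linear_inj_iff_unique_preimage_in_open[OF matrix_vector_mul_linear open_positive_orthant_cart, of x A]
    assms full_rank_injective[of A]
  by simp

lemma rank_less_card_rows_if_zero_row:
  fixes A :: "real^'n^'m"
  assumes "A $ i = 0"
  shows "rank A < CARD('m)"
proof -
  have "transpose A *v axis i 1 = 0"
    using assms by (simp add: vec_eq_iff transpose_def matrix_vector_mult_def axis_def if_distrib cong: if_cong)
  then have "\<not> inj ((*v) (transpose A))"
    by (metis axis_eq_0_iff matrix_vector_mult_0_right injD zero_neq_one)
  then have "rank A \<noteq> CARD('m)"
    by (metis full_rank_injective rank_transpose)
  then show ?thesis
    using rank_bound[of A] by simp
qed

lemma Bmat_row_self: "Bmat D th $ th = 0"
  by (simp add: vec_eq_iff Bmat_def matrix_matrix_mult_def mat_def sum.neutral)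

lemma ytilde_eq_Cmat_mult: "(\<Sum>s\<in>UNIV. x $ s) = 1 \<Longrightarrow> ytilde D th x = Cmat D th *v x"
  by (auto simp: vec_eq_iff ytilde_def Cmat_def matrix_vector_mult_def split: option.splits)

lemma rank_Cmat_le:
  fixes D :: "real^'s^'h"
  shows "rank (Cmat D th) \<le> CARD('h)"
proof -
  have "Cmat D th $ Some th = 0"
    by (simp add: Cmat_def Bmat_row_self)
  then show ?thesis
    using rank_less_card_rows_if_zero_row by fastforce
qed

theorem lemma1:
  fixes D :: "real^'s^'h" and x :: "real^'s" and th :: 'h
  assumes pos: "\<forall>s. x $ s > 0"
    and sum1: "(\<Sum>s\<in>UNIV. x $ s) = 1"
    and argmin: "\<forall>t. t \<noteq> th \<longrightarrow> (\<Sum>s\<in>UNIV. D $ th $ s * x $ s) < (\<Sum>s\<in>UNIV. D $ t $ s * x $ s)"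
  shows "((\<exists>!xt::real^'s. ytilde D th x = Cmat D th *v xt \<and> (\<forall>s. xt $ s > 0))
            \<longleftrightarrow> rank (Cmat D th) = CARD('s))
         \<and> ((\<exists>!xt::real^'s. ytilde D th x = Cmat D th *v xt \<and> (\<forall>s. xt $ s > 0))
            \<longrightarrow> CARD('h) \<ge> CARD('s))"
proof -
  have unique_iff: "(\<exists>!xt::real^'s. ytilde D th x = Cmat D th *v xt \<and> (\<forall>s. xt $ s > 0))
      \<longleftrightarrow> rank (Cmat D th) = CARD('s)"
    unfolding ytilde_eq_Cmat_mult[OF sum1] using unique_positive_preimage_iff_full_rank[OF pos] .
  then show ?thesis
    using rank_Cmat_le[of D th] by auto
qed

end
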